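(* Let $\{a_n\}_{n\ge 0}$ be a sequence of positive real numbers and let $N_0$ be a positive integer. (1) Suppose that $a_n^2-a_{n-1}a_{n+1}>0$ for all $n\ge N_0+1$ (strict log-concavity of $\{a_n\}_{n\ge N_0}$), and that $$\left(\frac{a_n}{a_{n-1}}\right)^2<\frac{a_{n-1}}{a_{n-2}}\cdot\frac{a_{n+1}}{a_n}\quad\text{for all } n\ge N_0+2$$ (strict ratio-log-convexity of $\{a_n\}_{n\ge N_0}$). Then for all $n\ge N_0+1$, $$a_n^2(a_n^2-a_{n-1}a_{n+1})>a_{n-1}^2(a_{n+1}^2-a_na_{n+2}).$$ (2) Suppose instead that $\{a_n\}_{n\ge N_0}$ is strictly $2$-log-convex, i.e. setting $b_n=a_{n-1}a_{n+1}-a_n^2$, we have $b_n>0$ for all $n\ge N_0+1$ and $b_n^2<b_{n-1}b_{n+1}$ for all $n\ge N_0+2$, and that the strict ratio-log-convexity condition of part (1) holds. Then the same inequality $a_n^2(a_n^2-a_{n-1}a_{n+1})>a_{n-1}^2(a_{n+1}^2-a_na_{n+2})$ holds for all $n\ge N_0+2$. *)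

theory Defs
  imports Complex_Main
begin

end

theory Submission
  imports Defs
begin

text \<open>For four consecutive terms \<open>x, y, z, w\<close> of the sequence one has the identity
  \<open>y\<^sup>3 (y\<^sup>2 (y\<^sup>2 - x z) - x\<^sup>2 (z\<^sup>2 - y w)) = (x\<^sup>2 y\<^sup>4 w - x\<^sup>3 y z\<^sup>3) + y (y\<^sup>2 - x z)\<^sup>2 (y\<^sup>2 + x z)\<close>,
and strict ratio-log-convexity at the index of \<open>z\<close> says \<open>x z\<^sup>3 < y\<^sup>3 w\<close>, which makes the first
summand positive. So positivity and ratio-log-convexity alone give the inequality.\<close>

lemma ratio_log_convex_imp_ineq:
  fixes x y z w :: real
  assumes pos: "x > 0" "y > 0" "z > 0" "w > 0"
    and ratio: "(z / y)^2 < (y / x) * (w / z)"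
  shows "x^2 * (z^2 - y * w) < y^2 * (y^2 - x * z)"
proof -
  have "x * z^3 < y^3 * w"
    using ratio pos by (simp add: field_simps power2_eq_square power3_eq_cube)
  then have "x^3 * y * z^3 < x^2 * y^4 * w"
    using mult_strict_left_mono[of _ _ "x^2 * y"] pos
    by (simp add: algebra_simps power2_eq_square power3_eq_cube power4_eq_xxxx)
  moreover have "0 \<le> y * ((y^2 - x * z)^2 * (y^2 + x * z))"
    using pos by simp
  ultimately have "0 < y^3 * (y^2 * (y^2 - x * z) - x^2 * (z^2 - y * w))"
    by (simp add: algebra_simps power2_eq_square power3_eq_cube power4_eq_xxxx)
  then show ?thesis
    using pos by (simp add: zero_less_mult_iff)
qed

lemma ratio_log_convex_seq_imp_ineq:
  fixes a :: "nat \<Rightarrow> real"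
  assumes pos: "\<And>n. a n > 0"
    and ratio: "\<forall>n\<ge>N + 2. (a n / a (n - 1))^2 < (a (n - 1) / a (n - 2)) * (a (n + 1) / a n)"
    and n: "n \<ge> N + 1"
  shows "(a (n - 1))^2 * ((a (n + 1))^2 - a n * a (n + 2))
           < (a n)^2 * ((a n)^2 - a (n - 1) * a (n + 1))"
proof -
  have "(a (n + 1) / a n)^2 < (a n / a (n - 1)) * (a (n + 2) / a (n + 1))"
    using ratio[rule_format, of "n + 1"] n
    by (simp add: numeral_2_eq_2 Suc_diff_Suc)
  then show ?thesis
    by (rule ratio_log_convex_imp_ineq[OF pos pos pos pos])
qed

theorem theorem4p1:
  fixes a :: "nat \<Rightarrow> real" and N0 :: nat
  assumes pos: "\<And>n. a n > 0"
    and N0: "N0 \<ge> 1"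
  shows "((\<forall>n\<ge>N0 + 1. (a n)^2 - a (n - 1) * a (n + 1) > 0) \<and>
          (\<forall>n\<ge>N0 + 2. (a n / a (n - 1))^2 < (a (n - 1) / a (n - 2)) * (a (n + 1) / a n))
          \<longrightarrow> (\<forall>n\<ge>N0 + 1. (a n)^2 * ((a n)^2 - a (n - 1) * a (n + 1))
                 > (a (n - 1))^2 * ((a (n + 1))^2 - a n * a (n + 2))))
       \<and>
         ((\<forall>n\<ge>N0 + 1. a (n - 1) * a (n + 1) - (a n)^2 > 0) \<and>
          (\<forall>n\<ge>N0 + 2. (a (n - 1) * a (n + 1) - (a n)^2)^2
              < (a (n - 2) * a n - (a (n - 1))^2) * (a n * a (n + 2) - (a (n + 1))^2)) \<and>
          (\<forall>n\<ge>N0 + 2. (a n / a (n - 1))^2 < (a (n - 1) / a (n - 2)) * (a (n + 1) / a n))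
          \<longrightarrow> (\<forall>n\<ge>N0 + 2. (a n)^2 * ((a n)^2 - a (n - 1) * a (n + 1))
                 > (a (n - 1))^2 * ((a (n + 1))^2 - a n * a (n + 2))))"
proof (intro conjI impI allI)
  fix n
  assume "(\<forall>n\<ge>N0 + 1. (a n)^2 - a (n - 1) * a (n + 1) > 0) \<and>
          (\<forall>n\<ge>N0 + 2. (a n / a (n - 1))^2 < (a (n - 1) / a (n - 2)) * (a (n + 1) / a n))"
    and "n \<ge> N0 + 1"
  then show "(a n)^2 * ((a n)^2 - a (n - 1) * a (n + 1))
               > (a (n - 1))^2 * ((a (n + 1))^2 - a n * a (n + 2))"
    using ratio_log_convex_seq_imp_ineq[of a N0 n] pos by blast
next
  fix n
  assume "(\<forall>n\<ge>N0 + 1. a (n - 1) * a (n + 1) - (a n)^2 > 0) \<and>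
          (\<forall>n\<ge>N0 + 2. (a (n - 1) * a (n + 1) - (a n)^2)^2
              < (a (n - 2) * a n - (a (n - 1))^2) * (a n * a (n + 2) - (a (n + 1))^2)) \<and>
          (\<forall>n\<ge>N0 + 2. (a n / a (n - 1))^2 < (a (n - 1) / a (n - 2)) * (a (n + 1) / a n))"
    and "n \<ge> N0 + 2"
  then show "(a n)^2 * ((a n)^2 - a (n - 1) * a (n + 1))
               > (a (n - 1))^2 * ((a (n + 1))^2 - a n * a (n + 2))"
    using ratio_log_convex_seq_imp_ineq[of a N0 n] pos by auto
qed

end
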